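(* Let $n\in\mathbb{N}$ and let $M\models \mathrm{I}\Delta_0$. Suppose $M$ admits a proper $\Sigma_{n+2}$-elementary end extension $K$ with $K\models \mathrm{B}\Sigma_{n+1}$. Then for every $a\in M$ and every $\Pi_{n+1}$-formula $\phi(x,y)$ with parameters from $M$, \[M\models \forall x\,\exists y<a\,\phi(x,y)\;\rightarrow\;\exists y<a\,\forall b\,\exists x>b\,\phi(x,y).\]
   Context: All theories contain $\mathrm{PA}^-$ (the theory of non-negative parts of discretely ordered rings). $\mathrm{I}\Delta_0$ is bounded induction; $\mathrm{B}\Sigma_{k}$ is the $\Sigma_k$-collection scheme $\forall x<a\,\exists y\,\phi(x,y)\to\exists b\,\forall x<a\,\exists y<b\,\phi(x,y)$ for $\Sigma_k$ formulas $\phi$ (with parameters), taken together with $\mathrm{I}\Delta_0$. An extension $M\subseteq K$ of models of first-order arithmetic is $\Sigma_k$-elementary if every $\Sigma_k$ formula with parameters from $M$ has the same truth value in $M$ and $K$; it is an end extension if every element of $K\setminus M$ is greater than every element of $M$; it is proper if $K\neq M$. *)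

theory Defs
  imports Main
begin

datatype trm = Var nat | Zero | One | Plus trm trm | Times trm trm

datatype fm =
    Eq trm trm
  | Lt trm trm
  | Neg fm
  | Conj fm fm
  | Disj fm fm
  | Ex nat fm
  | All nat fm

fun trm_vars :: "trm \<Rightarrow> nat set" where
  "trm_vars (Var i) = {i}"
| "trm_vars Zero = {}"
| "trm_vars One = {}"
| "trm_vars (Plus s t) = trm_vars s \<union> trm_vars t"
| "trm_vars (Times s t) = trm_vars s \<union> trm_vars t"

definition BEx :: "nat \<Rightarrow> trm \<Rightarrow> fm \<Rightarrow> fm" where
  "BEx x t \<phi> = Ex x (Conj (Lt (Var x) t) \<phi>)"
definition BAll :: "nat \<Rightarrow> trm \<Rightarrow> fm \<Rightarrow> fm" where
  "BAll x t \<phi> = All x (Disj (Neg (Lt (Var x) t)) \<phi>)"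

inductive delta0 :: "fm \<Rightarrow> bool" where
  "delta0 (Eq s t)"
| "delta0 (Lt s t)"
| "delta0 \<phi> \<Longrightarrow> delta0 (Neg \<phi>)"
| "delta0 \<phi> \<Longrightarrow> delta0 \<psi> \<Longrightarrow> delta0 (Conj \<phi> \<psi>)"
| "delta0 \<phi> \<Longrightarrow> delta0 \<psi> \<Longrightarrow> delta0 (Disj \<phi> \<psi>)"
| "x \<notin> trm_vars t \<Longrightarrow> delta0 \<phi> \<Longrightarrow> delta0 (BEx x t \<phi>)"
| "x \<notin> trm_vars t \<Longrightarrow> delta0 \<phi> \<Longrightarrow> delta0 (BAll x t \<phi>)"

inductive sigma :: "nat \<Rightarrow> fm \<Rightarrow> bool" and pi :: "nat \<Rightarrow> fm \<Rightarrow> bool" where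
  "delta0 \<phi> \<Longrightarrow> sigma 0 \<phi>"
| "delta0 \<phi> \<Longrightarrow> pi 0 \<phi>"
| "pi n \<phi> \<Longrightarrow> sigma (Suc n) \<phi>"
| "sigma (Suc n) \<phi> \<Longrightarrow> sigma (Suc n) (Ex x \<phi>)"
| "sigma n \<phi> \<Longrightarrow> pi (Suc n) \<phi>"
| "pi (Suc n) \<phi> \<Longrightarrow> pi (Suc n) (All x \<phi>)"

record 'a struc =
  dom :: "'a set"
  zer :: 'a
  one :: 'a
  pls :: "'a \<Rightarrow> 'a \<Rightarrow> 'a"
  tms :: "'a \<Rightarrow> 'a \<Rightarrow> 'a"
  lss :: "'a \<Rightarrow> 'a \<Rightarrow> bool"

fun eval :: "'a struc \<Rightarrow> (nat \<Rightarrow> 'a) \<Rightarrow> trm \<Rightarrow> 'a" where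
  "eval M e (Var i) = e i"
| "eval M e Zero = zer M"
| "eval M e One = one M"
| "eval M e (Plus s t) = pls M (eval M e s) (eval M e t)"
| "eval M e (Times s t) = tms M (eval M e s) (eval M e t)"

fun sat :: "'a struc \<Rightarrow> (nat \<Rightarrow> 'a) \<Rightarrow> fm \<Rightarrow> bool" where
  "sat M e (Eq s t) = (eval M e s = eval M e t)"
| "sat M e (Lt s t) = lss M (eval M e s) (eval M e t)"
| "sat M e (Neg \<phi>) = (\<not> sat M e \<phi>)"
| "sat M e (Conj \<phi> \<psi>) = (sat M e \<phi> \<and> sat M e \<psi>)"
| "sat M e (Disj \<phi> \<psi>) = (sat M e \<phi> \<or> sat M e \<psi>)"
| "sat M e (Ex x \<phi>) = (\<exists>a\<in>dom M. sat M (e(x := a)) \<phi>)"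
| "sat M e (All x \<phi>) = (\<forall>a\<in>dom M. sat M (e(x := a)) \<phi>)"

definition env :: "'a struc \<Rightarrow> (nat \<Rightarrow> 'a) \<Rightarrow> bool" where
  "env M e \<longleftrightarrow> (\<forall>i. e i \<in> dom M)"

text \<open>PA^-: non-negative parts of discretely ordered rings (axioms as in Kaye).\<close>
definition PAminus :: "'a struc \<Rightarrow> bool" where
  "PAminus M \<longleftrightarrow>
     zer M \<in> dom M \<and> one M \<in> dom M \<and>
     (\<forall>x\<in>dom M. \<forall>y\<in>dom M. pls M x y \<in> dom M \<and> tms M x y \<in> dom M) \<and>
     (\<forall>x\<in>dom M. \<forall>y\<in>dom M. \<forall>z\<in>dom M.
        pls M x y = pls M y x \<and>
        pls M (pls M x y) z = pls M x (pls M y z) \<and>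
        tms M x y = tms M y x \<and>
        tms M (tms M x y) z = tms M x (tms M y z) \<and>
        pls M x (zer M) = x \<and>
        tms M x (zer M) = zer M \<and>
        tms M x (one M) = x \<and>
        tms M x (pls M y z) = pls M (tms M x y) (tms M x z) \<and>
        \<not> lss M x x \<and>
        (lss M x y \<and> lss M y z \<longrightarrow> lss M x z) \<and>
        (lss M x y \<or> x = y \<or> lss M y x) \<and>
        (lss M x y \<longrightarrow> lss M (pls M x z) (pls M y z)) \<and>
        (lss M (zer M) z \<and> lss M x y \<longrightarrow> lss M (tms M x z) (tms M y z)) \<and>
        (lss M x y \<longrightarrow> (\<exists>w\<in>dom M. pls M x w = y)) \<and>
        (lss M (zer M) x \<longrightarrow> (one M = x \<or> lss M (one M) x)) \<and>
        (zer M = x \<or> lss M (zer M) x)) \<and>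
     lss M (zer M) (one M)"

definition IDelta0 :: "'a struc \<Rightarrow> bool" where
  "IDelta0 M \<longleftrightarrow> PAminus M \<and>
     (\<forall>\<phi> x e. delta0 \<phi> \<longrightarrow> env M e \<longrightarrow>
        sat M (e(x := zer M)) \<phi> \<longrightarrow>
        (\<forall>a\<in>dom M. sat M (e(x := a)) \<phi> \<longrightarrow> sat M (e(x := pls M a (one M))) \<phi>) \<longrightarrow>
        (\<forall>a\<in>dom M. sat M (e(x := a)) \<phi>))"

definition BSigma :: "nat \<Rightarrow> 'a struc \<Rightarrow> bool" where
  "BSigma k M \<longleftrightarrow> IDelta0 M \<and>
     (\<forall>\<phi> x y e. sigma k \<phi> \<longrightarrow> x \<noteq> y \<longrightarrow> env M e \<longrightarrow>
        (\<forall>a\<in>dom M.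
          (\<forall>u\<in>dom M. lss M u a \<longrightarrow> (\<exists>v\<in>dom M. sat M (e(x := u, y := v)) \<phi>)) \<longrightarrow>
          (\<exists>b\<in>dom M. \<forall>u\<in>dom M. lss M u a \<longrightarrow>
              (\<exists>v\<in>dom M. lss M v b \<and> sat M (e(x := u, y := v)) \<phi>))))"

definition substructure :: "'a struc \<Rightarrow> 'a struc \<Rightarrow> bool" where
  "substructure M K \<longleftrightarrow> dom M \<subseteq> dom K \<and> zer M = zer K \<and> one M = one K \<and>
     (\<forall>x\<in>dom M. \<forall>y\<in>dom M. pls M x y = pls K x y \<and> tms M x y = tms K x y
        \<and> (lss M x y \<longleftrightarrow> lss K x y))"

definition sigma_elementary :: "nat \<Rightarrow> 'a struc \<Rightarrow> 'a struc \<Rightarrow> bool" where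
  "sigma_elementary k M K \<longleftrightarrow> substructure M K \<and>
     (\<forall>\<phi> e. sigma k \<phi> \<longrightarrow> env M e \<longrightarrow> (sat M e \<phi> \<longleftrightarrow> sat K e \<phi>))"

definition end_extension :: "'a struc \<Rightarrow> 'a struc \<Rightarrow> bool" where
  "end_extension M K \<longleftrightarrow> substructure M K \<and>
     (\<forall>x\<in>dom K - dom M. \<forall>y\<in>dom M. lss K y x)"

definition proper_extension :: "'a struc \<Rightarrow> 'a struc \<Rightarrow> bool" where
  "proper_extension M K \<longleftrightarrow> substructure M K \<and> dom K \<noteq> dom M"

end

theory Submission
  imports Defs
begin

text \<open>
  Fix \<open>c \<in> K - M\<close>. Collection in \<open>K\<close> makes the \<open>\<Sigma>\<^sub>n\<^sub>+\<^sub>1\<close> formulas closed, up to equivalence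
  in \<open>K\<close>, under \<open>\<and>\<close>, \<open>\<or>\<close> and bounded quantification, so \<open>\<forall>y<a. \<not> \<phi>(x, y)\<close> is equivalent in \<open>K\<close>
  to a \<open>\<Sigma>\<^sub>n\<^sub>+\<^sub>1\<close> formula and \<open>b < x \<and> \<phi>(x, y)\<close> to a \<open>\<Pi>\<^sub>n\<^sub>+\<^sub>1\<close> formula. If \<open>K\<close> satisfied
  \<open>\<forall>y<a. \<not> \<phi>(c, y)\<close>, the \<open>\<Sigma>\<^sub>n\<^sub>+\<^sub>2\<close> statement \<open>\<exists>x \<forall>y<a. \<not> \<phi>(x, y)\<close> would reflect to \<open>M\<close>, against
  the hypothesis. Hence \<open>K \<Turnstile> \<phi>(c, v)\<close> for some \<open>v < a\<close>, and \<open>v \<in> M\<close> since \<open>K\<close> end-extends \<open>M\<close>.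
  For each \<open>b \<in> M\<close>, \<open>c\<close> witnesses the \<open>\<Sigma>\<^sub>n\<^sub>+\<^sub>2\<close> statement \<open>\<exists>x. b < x \<and> \<phi>(x, v)\<close> in \<open>K\<close>,
  which again reflects to \<open>M\<close>.
\<close>

fun fv :: "fm \<Rightarrow> nat set" where
  "fv (Eq s t) = trm_vars s \<union> trm_vars t"
| "fv (Lt s t) = trm_vars s \<union> trm_vars t"
| "fv (Neg \<phi>) = fv \<phi>"
| "fv (Conj \<phi> \<psi>) = fv \<phi> \<union> fv \<psi>"
| "fv (Disj \<phi> \<psi>) = fv \<phi> \<union> fv \<psi>"
| "fv (Ex x \<phi>) = fv \<phi> - {x}"
| "fv (All x \<phi>) = fv \<phi> - {x}"

lemma finite_trm_vars: "finite (trm_vars t)"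
  by (induction t) auto

lemma finite_fv: "finite (fv \<phi>)"
  by (induction \<phi>) (auto simp: finite_trm_vars)

lemma eval_cong: "\<forall>i\<in>trm_vars t. e i = e' i \<Longrightarrow> eval M e t = eval M e' t"
  by (induction t) auto

lemma sat_cong: "\<forall>i\<in>fv \<phi>. e i = e' i \<Longrightarrow> sat M e \<phi> = sat M e' \<phi>"
proof (induction \<phi> arbitrary: e e')
  case (Ex x \<phi>)
  have "\<And>a. sat M (e(x := a)) \<phi> = sat M (e'(x := a)) \<phi>"
    by (rule Ex.IH) (use Ex.prems in auto)
  then show ?case by simp
next
  case (All x \<phi>)
  have "\<And>a. sat M (e(x := a)) \<phi> = sat M (e'(x := a)) \<phi>"
    by (rule All.IH) (use All.prems in auto)
  then show ?case by simp
next
  case (Eq s t)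
  then show ?case using eval_cong[of s e e' M] eval_cong[of t e e' M] by simp
next
  case (Lt s t)
  then show ?case using eval_cong[of s e e' M] eval_cong[of t e e' M] by simp
qed (simp_all, (metis UnCI)+)

lemma sat_fun_upd_fresh: "x \<notin> fv \<phi> \<Longrightarrow> sat M (e(x := a)) \<phi> = sat M e \<phi>"
  by (rule sat_cong) auto

lemma env_fun_upd: "env M e \<Longrightarrow> a \<in> dom M \<Longrightarrow> env M (e(x := a))"
  by (simp add: env_def)

lemma sat_BEx_Var:
  "x \<noteq> v \<Longrightarrow> sat M e (BEx x (Var v) \<phi>) \<longleftrightarrow> (\<exists>a\<in>dom M. lss M a (e v) \<and> sat M (e(x := a)) \<phi>)"
  by (simp add: BEx_def)

lemma sat_BAll_Var:
  "x \<noteq> v \<Longrightarrow> sat M e (BAll x (Var v) \<phi>) \<longleftrightarrow> (\<forall>a\<in>dom M. lss M a (e v) \<longrightarrow> sat M (e(x := a)) \<phi>)"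
  by (auto simp: BAll_def)

lemma delta0_sigma_pi: "delta0 \<phi> \<Longrightarrow> sigma k \<phi> \<and> pi k \<phi>"
  by (induction k) (auto intro: sigma_pi.intros)

lemmas sigma_Suc_of_pi = sigma_pi.intros(3)
lemmas sigma_Suc_Ex = sigma_pi.intros(4)

lemma sigma_pi_Suc: "(sigma k \<phi> \<longrightarrow> sigma (Suc k) \<phi>) \<and> (pi k \<psi> \<longrightarrow> pi (Suc k) \<psi>)"
  by (rule sigma_pi.induct[of "\<lambda>k \<phi>. sigma (Suc k) \<phi>" "\<lambda>k \<phi>. pi (Suc k) \<phi>"])
    (auto intro: sigma_pi.intros)

lemma sigma_mono: "sigma j \<phi> \<Longrightarrow> j \<le> k \<Longrightarrow> sigma k \<phi>"
  by (induction k) (use sigma_pi_Suc le_Suc_eq in auto)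

fun dual :: "fm \<Rightarrow> fm" where
  "dual (Eq s t) = Neg (Eq s t)"
| "dual (Lt s t) = Neg (Lt s t)"
| "dual (Neg \<phi>) = \<phi>"
| "dual (Conj \<phi> \<psi>) = Disj (dual \<phi>) (dual \<psi>)"
| "dual (Disj \<phi> \<psi>) = Conj (dual \<phi>) (dual \<psi>)"
| "dual (Ex x \<phi>) = All x (dual \<phi>)"
| "dual (All x \<phi>) = Ex x (dual \<phi>)"

lemma sat_dual [simp]: "sat M e (dual \<phi>) \<longleftrightarrow> \<not> sat M e \<phi>"
  by (induction \<phi> arbitrary: e) auto

lemma dual_BEx: "dual (BEx x t \<phi>) = BAll x t (dual \<phi>)"
  by (simp add: BEx_def BAll_def)

lemma dual_BAll: "dual (BAll x t \<phi>) = BEx x t (dual \<phi>)"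
  by (simp add: BEx_def BAll_def)

lemma delta0_dual: "delta0 \<phi> \<Longrightarrow> delta0 (dual \<phi>)"
  by (induction rule: delta0.induct) (auto intro: delta0.intros simp: dual_BEx dual_BAll)

lemma sigma_pi_dual: "(sigma k \<phi> \<longrightarrow> pi k (dual \<phi>)) \<and> (pi k' \<psi> \<longrightarrow> sigma k' (dual \<psi>))"
  by (rule sigma_pi.induct[of "\<lambda>k \<phi>. pi k (dual \<phi>)" "\<lambda>k \<phi>. sigma k (dual \<phi>)"])
    (auto intro: sigma_pi.intros delta0_dual)

lemma pi_dual: "sigma k \<phi> \<Longrightarrow> pi k (dual \<phi>)"
  and sigma_dual: "pi k \<phi> \<Longrightarrow> sigma k (dual \<phi>)"
  using sigma_pi_dual by blast+

fun rename_trm :: "(nat \<Rightarrow> nat) \<Rightarrow> trm \<Rightarrow> trm" where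
  "rename_trm f (Var i) = Var (f i)"
| "rename_trm f Zero = Zero"
| "rename_trm f One = One"
| "rename_trm f (Plus s t) = Plus (rename_trm f s) (rename_trm f t)"
| "rename_trm f (Times s t) = Times (rename_trm f s) (rename_trm f t)"

fun rename :: "(nat \<Rightarrow> nat) \<Rightarrow> fm \<Rightarrow> fm" where
  "rename f (Eq s t) = Eq (rename_trm f s) (rename_trm f t)"
| "rename f (Lt s t) = Lt (rename_trm f s) (rename_trm f t)"
| "rename f (Neg \<phi>) = Neg (rename f \<phi>)"
| "rename f (Conj \<phi> \<psi>) = Conj (rename f \<phi>) (rename f \<psi>)"
| "rename f (Disj \<phi> \<psi>) = Disj (rename f \<phi>) (rename f \<psi>)"
| "rename f (Ex x \<phi>) = Ex (f x) (rename f \<phi>)"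
| "rename f (All x \<phi>) = All (f x) (rename f \<phi>)"

lemma eval_rename_trm: "eval M e (rename_trm f t) = eval M (e \<circ> f) t"
  by (induction t) auto

lemma trm_vars_rename_trm: "trm_vars (rename_trm f t) = f ` trm_vars t"
  by (induction t) auto

lemma fun_upd_comp_inj: "inj f \<Longrightarrow> e(f x := a) \<circ> f = (e \<circ> f)(x := a)"
  by (auto simp: fun_eq_iff inj_eq)

lemma sat_rename: "inj f \<Longrightarrow> sat M e (rename f \<phi>) = sat M (e \<circ> f) \<phi>"
  by (induction \<phi> arbitrary: e) (auto simp: eval_rename_trm fun_upd_comp_inj)

lemma fv_rename: "inj f \<Longrightarrow> fv (rename f \<phi>) = f ` fv \<phi>"
  by (induction \<phi>) (auto simp: trm_vars_rename_trm inj_eq)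

lemma delta0_rename: "delta0 \<phi> \<Longrightarrow> inj f \<Longrightarrow> delta0 (rename f \<phi>)"
proof (induction rule: delta0.induct)
  case (6 x t \<phi>)
  then have "f x \<notin> trm_vars (rename_trm f t)" by (auto simp: trm_vars_rename_trm inj_eq)
  then show ?case using 6 by (auto simp: BEx_def intro: delta0.intros(6)[unfolded BEx_def])
next
  case (7 x t \<phi>)
  then have "f x \<notin> trm_vars (rename_trm f t)" by (auto simp: trm_vars_rename_trm inj_eq)
  then show ?case using 7 by (auto simp: BAll_def intro: delta0.intros(7)[unfolded BAll_def])
qed (auto intro: delta0.intros)

lemma pi_rename: "inj f \<Longrightarrow> pi k \<phi> \<Longrightarrow> pi k (rename f \<phi>)"
proof -
  assume "inj f"
  then have "(sigma k \<psi> \<longrightarrow> sigma k (rename f \<psi>)) \<and> (pi k \<phi> \<longrightarrow> pi k (rename f \<phi>))" for \<psi>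
    by (intro sigma_pi.induct[of "\<lambda>k \<phi>. sigma k (rename f \<phi>)" "\<lambda>k \<phi>. pi k (rename f \<phi>)"])
      (auto intro: sigma_pi.intros delta0_rename)
  then show "pi k \<phi> \<Longrightarrow> pi k (rename f \<phi>)" by blast
qed

section \<open>Prenex blocks\<close>

fun exs :: "nat list \<Rightarrow> fm \<Rightarrow> fm" where
  "exs [] \<alpha> = \<alpha>"
| "exs (y # ys) \<alpha> = Ex y (exs ys \<alpha>)"

lemma exs_append: "exs (xs @ ys) \<alpha> = exs xs (exs ys \<alpha>)"
  by (induction xs) auto

lemma fv_exs: "fv (exs ys \<alpha>) = fv \<alpha> - set ys"
  by (induction ys) auto

lemma rename_exs: "rename f (exs ys \<alpha>) = exs (map f ys) (rename f \<alpha>)"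
  by (induction ys) auto

lemma sigma_Suc_exs: "pi m \<alpha> \<Longrightarrow> sigma (Suc m) (exs ys \<alpha>)"
  by (induction ys) (auto intro: sigma_pi.intros)

lemma sigma_Suc_prenex: "sigma (Suc m) \<phi> \<Longrightarrow> \<exists>ys \<alpha>. pi m \<alpha> \<and> \<phi> = exs ys \<alpha>"
proof (induction \<phi>)
  case (Ex x \<phi>)
  from Ex.prems show ?case
  proof (cases rule: sigma.cases)
    case 2
    then show ?thesis by (metis exs.simps(1))
  next
    case 3
    with Ex.IH obtain ys \<alpha> where "pi m \<alpha>" "\<phi> = exs ys \<alpha>" by blast
    then show ?thesis by (metis exs.simps(2))
  qed
qed (erule sigma.cases, auto intro: exI[of _ "[]"])+

lemma inj_fixing_avoiding:
  fixes F G :: "nat set"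
  assumes "finite F" "finite G"
  obtains f where "inj f" "\<And>i. i \<in> F \<Longrightarrow> f i = i" "\<And>i. i \<notin> F \<Longrightarrow> f i \<notin> G"
proof
  define N where "N = Suc (Max (insert 0 (F \<union> G)))"
  have N: "i < N" if "i \<in> F \<union> G" for i
    using assms that by (simp add: N_def le_imp_less_Suc)
  define f where "f i = (if i \<in> F then i else i + N)" for i
  show "inj f"
    by (rule injI) (use N in \<open>auto simp: f_def split: if_splits\<close>)
  show "\<And>i. i \<in> F \<Longrightarrow> f i = i" by (simp add: f_def)
  show "\<And>i. i \<notin> F \<Longrightarrow> f i \<notin> G" using N by (force simp: f_def)
qed

lemma sigma_Suc_prenex_avoiding:
  assumes "sigma (Suc m) \<phi>" "finite G"
  obtains ys \<alpha> where "set ys \<inter> G = {}" "pi m \<alpha>" "fv (exs ys \<alpha>) = fv \<phi>"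
    "\<forall>(M :: 'a struc) e. sat M e (exs ys \<alpha>) = sat M e \<phi>"
proof -
  obtain xs \<beta> where \<beta>: "pi m \<beta>" and \<phi>: "\<phi> = exs xs \<beta>"
    using sigma_Suc_prenex[OF assms(1)] by blast
  obtain f where f: "inj f" "\<And>i. i \<in> fv \<phi> \<Longrightarrow> f i = i" "\<And>i. i \<notin> fv \<phi> \<Longrightarrow> f i \<notin> G"
    using inj_fixing_avoiding[OF finite_fv assms(2)] by blast
  have "set (map f xs) \<inter> G = {}" using f(3) by (auto simp: \<phi> fv_exs)
  moreover have "pi m (rename f \<beta>)" using pi_rename[OF f(1) \<beta>] .
  moreover have "fv (exs (map f xs) (rename f \<beta>)) = fv \<phi>"
    using f(1,2) by (force simp: \<phi> fv_rename rename_exs[symmetric])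
  moreover have "\<forall>(M :: 'a struc) e. sat M e (exs (map f xs) (rename f \<beta>)) = sat M e \<phi>"
    using f(1,2) by (auto simp: rename_exs[symmetric] sat_rename \<phi> intro!: sat_cong)
  ultimately show thesis by (rule that)
qed

lemma sat_connective_exs_left:
  assumes "c = Conj \<or> c = Disj" "set xs \<inter> fv \<beta> = {}" "dom M \<noteq> {}"
  shows "sat M e (c (exs xs \<alpha>) \<beta>) = sat M e (exs xs (c \<alpha> \<beta>))"
  using assms(2)
proof (induction xs arbitrary: e)
  case (Cons x xs)
  then have "sat M (e(x := a)) \<beta> = sat M e \<beta>"
    and "sat M (e(x := a)) (c (exs xs \<alpha>) \<beta>) = sat M (e(x := a)) (exs xs (c \<alpha> \<beta>))" for a
    by (simp_all add: sat_fun_upd_fresh)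
  moreover have "sat M e (c (exs (x # xs) \<alpha>) \<beta>) = (\<exists>a\<in>dom M. sat M (e(x := a)) (c (exs xs \<alpha>) \<beta>))"
    using calculation(1) assms(1,3) by auto
  ultimately show ?case by simp
qed simp

lemma sat_connective_exs_right:
  assumes "c = Conj \<or> c = Disj" "set xs \<inter> fv \<beta> = {}" "dom M \<noteq> {}"
  shows "sat M e (c \<beta> (exs xs \<alpha>)) = sat M e (exs xs (c \<beta> \<alpha>))"
  using assms(2)
proof (induction xs arbitrary: e)
  case (Cons x xs)
  then have "sat M (e(x := a)) \<beta> = sat M e \<beta>"
    and "sat M (e(x := a)) (c \<beta> (exs xs \<alpha>)) = sat M (e(x := a)) (exs xs (c \<beta> \<alpha>))" for a
    by (simp_all add: sat_fun_upd_fresh)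
  moreover have "sat M e (c \<beta> (exs (x # xs) \<alpha>)) = (\<exists>a\<in>dom M. sat M (e(x := a)) (c \<beta> (exs xs \<alpha>)))"
    using calculation(1) assms(1,3) by auto
  ultimately show ?case by simp
qed simp

definition equiv_in :: "'a struc \<Rightarrow> fm \<Rightarrow> fm \<Rightarrow> bool" where
  "equiv_in K \<phi> \<psi> \<longleftrightarrow> (\<forall>e. env K e \<longrightarrow> sat K e \<phi> = sat K e \<psi>)"

lemma equiv_inI: "(\<And>e. env K e \<Longrightarrow> sat K e \<phi> = sat K e \<psi>) \<Longrightarrow> equiv_in K \<phi> \<psi>"
  by (simp add: equiv_in_def)

lemma equiv_in_refl [simp]: "equiv_in K \<phi> \<phi>"
  by (simp add: equiv_in_def)

lemma equiv_in_trans [trans]: "equiv_in K \<phi> \<psi> \<Longrightarrow> equiv_in K \<psi> \<chi> \<Longrightarrow> equiv_in K \<phi> \<chi>"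
  by (simp add: equiv_in_def)

lemma equiv_in_Conj: "equiv_in K \<phi> \<phi>' \<Longrightarrow> equiv_in K \<psi> \<psi>' \<Longrightarrow> equiv_in K (Conj \<phi> \<psi>) (Conj \<phi>' \<psi>')"
  and equiv_in_Disj: "equiv_in K \<phi> \<phi>' \<Longrightarrow> equiv_in K \<psi> \<psi>' \<Longrightarrow> equiv_in K (Disj \<phi> \<psi>) (Disj \<phi>' \<psi>')"
  by (simp_all add: equiv_in_def)

lemma equiv_in_Ex: "equiv_in K \<phi> \<phi>' \<Longrightarrow> equiv_in K (Ex x \<phi>) (Ex x \<phi>')"
  and equiv_in_All: "equiv_in K \<phi> \<phi>' \<Longrightarrow> equiv_in K (All x \<phi>) (All x \<phi>')"
  by (auto simp: equiv_in_def env_fun_upd)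

lemma equiv_in_BAll: "equiv_in K \<phi> \<phi>' \<Longrightarrow> equiv_in K (BAll x t \<phi>) (BAll x t \<phi>')"
  unfolding BAll_def by (intro equiv_in_All equiv_in_Disj equiv_in_refl)

lemma equiv_in_exs: "equiv_in K \<phi> \<phi>' \<Longrightarrow> equiv_in K (exs ys \<phi>) (exs ys \<phi>')"
  by (induction ys) (auto intro: equiv_in_Ex)

lemma PAminus_zer_in_dom: "PAminus K \<Longrightarrow> zer K \<in> dom K"
  by (simp add: PAminus_def)

lemma PAminus_lss_irrefl: "PAminus K \<Longrightarrow> x \<in> dom K \<Longrightarrow> \<not> lss K x x"
  by (simp add: PAminus_def)

lemma PAminus_lss_trans:
  "PAminus K \<Longrightarrow> x \<in> dom K \<Longrightarrow> y \<in> dom K \<Longrightarrow> z \<in> dom K \<Longrightarrow> lss K x y \<Longrightarrow> lss K y z \<Longrightarrow> lss K x z"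
  unfolding PAminus_def by blast

lemma PAminus_lss_succ:
  assumes "PAminus K" "x \<in> dom K"
  shows "pls K x (one K) \<in> dom K" "lss K x (pls K x (one K))"
proof -
  have one: "one K \<in> dom K" and zer: "zer K \<in> dom K" and "lss K (zer K) (one K)"
    using assms(1) by (simp_all add: PAminus_def)
  with assms have "lss K (pls K (zer K) x) (pls K (one K) x)"
    unfolding PAminus_def by blast
  moreover have "pls K (zer K) x = x" "pls K (one K) x = pls K x (one K)"
    using assms zer one unfolding PAminus_def by metis+
  ultimately show "lss K x (pls K x (one K))" by simp
  show "pls K x (one K) \<in> dom K" using assms one unfolding PAminus_def by blast
qed

lemma PAminus_upper_bound:
  assumes "PAminus K" "x \<in> dom K" "y \<in> dom K"
  obtains w where "w \<in> dom K" "lss K x w" "lss K y w"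
proof -
  obtain z where z: "z \<in> dom K" "x = z \<or> lss K x z" "y = z \<or> lss K y z"
    using assms unfolding PAminus_def by metis
  show thesis
    using that PAminus_lss_succ[OF assms(1) z(1)] z assms PAminus_lss_trans[OF assms(1)] by metis
qed

fun bexs :: "nat list \<Rightarrow> nat \<Rightarrow> fm \<Rightarrow> fm" where
  "bexs [] w \<alpha> = \<alpha>"
| "bexs (y # ys) w \<alpha> = BEx y (Var w) (bexs ys w \<alpha>)"

fun balls :: "nat list \<Rightarrow> nat \<Rightarrow> fm \<Rightarrow> fm" where
  "balls [] w \<alpha> = \<alpha>"
| "balls (y # ys) w \<alpha> = BAll y (Var w) (balls ys w \<alpha>)"

lemma dual_bexs: "dual (bexs ys w \<alpha>) = balls ys w (dual \<alpha>)"
  by (induction ys) (auto simp: dual_BEx)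

lemma sat_bexs_Cons:
  "y \<noteq> v \<Longrightarrow> sat M (e(v := w)) (bexs (y # ys) v \<alpha>) \<longleftrightarrow>
     (\<exists>a\<in>dom M. lss M a w \<and> sat M (e(y := a, v := w)) (bexs ys v \<alpha>))"
  by (simp add: sat_BEx_Var fun_upd_twist)

lemma sat_bexs_mono:
  assumes "PAminus K" "w \<in> dom K" "w' \<in> dom K" "lss K w w'" "v \<notin> fv \<alpha>"
  shows "v \<notin> set ys \<Longrightarrow> sat K (e(v := w)) (bexs ys v \<alpha>) \<Longrightarrow> sat K (e(v := w')) (bexs ys v \<alpha>)"
proof (induction ys arbitrary: e)
  case Nil
  then show ?case by (metis bexs.simps(1) sat_fun_upd_fresh assms(5))
next
  case (Cons y ys)
  then have yv: "y \<noteq> v" and "v \<notin> set ys" by auto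
  from Cons.prems(2) obtain a where a: "a \<in> dom K" "lss K a w" "sat K (e(y := a, v := w)) (bexs ys v \<alpha>)"
    unfolding sat_bexs_Cons[OF yv] by blast
  then have "sat K (e(y := a, v := w')) (bexs ys v \<alpha>)" using Cons.IH \<open>v \<notin> set ys\<close> by blast
  moreover have "lss K a w'" using PAminus_lss_trans[OF assms(1) a(1) assms(2,3) a(2) assms(4)] .
  ultimately show ?case unfolding sat_bexs_Cons[OF yv] using a(1) by blast
qed

lemma sat_exs_iff_bexs:
  assumes "PAminus K" "v \<notin> fv \<alpha>"
  shows "v \<notin> set ys \<Longrightarrow> env K e \<Longrightarrow>
    sat K e (exs ys \<alpha>) \<longleftrightarrow> (\<exists>w\<in>dom K. sat K (e(v := w)) (bexs ys v \<alpha>))"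
proof (induction ys arbitrary: e)
  case Nil
  then show ?case using PAminus_zer_in_dom[OF assms(1)]
    by (metis bexs.simps(1) exs.simps(1) sat_fun_upd_fresh assms(2))
next
  case (Cons y ys)
  then have yv: "y \<noteq> v" and "v \<notin> set ys" by auto
  have "sat K (e(y := a)) (exs ys \<alpha>) \<longleftrightarrow> (\<exists>w\<in>dom K. sat K (e(y := a, v := w)) (bexs ys v \<alpha>))"
    if "a \<in> dom K" for a
    using Cons.IH[OF \<open>v \<notin> set ys\<close> env_fun_upd[OF Cons.prems(2) that]] .
  then have "sat K e (exs (y # ys) \<alpha>) \<longleftrightarrow>
      (\<exists>a\<in>dom K. \<exists>w\<in>dom K. sat K (e(y := a, v := w)) (bexs ys v \<alpha>))"
    by simp
  also have "\<dots> \<longleftrightarrow> (\<exists>w\<in>dom K. \<exists>a\<in>dom K. lss K a w \<and> sat K (e(y := a, v := w)) (bexs ys v \<alpha>))"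
  proof
    assume "\<exists>a\<in>dom K. \<exists>w\<in>dom K. sat K (e(y := a, v := w)) (bexs ys v \<alpha>)"
    then obtain a w where a: "a \<in> dom K" "w \<in> dom K" "sat K (e(y := a, v := w)) (bexs ys v \<alpha>)"
      by blast
    obtain w' where w': "w' \<in> dom K" "lss K w w'" "lss K a w'"
      using PAminus_upper_bound[OF assms(1) a(2,1)] .
    have "sat K (e(y := a, v := w')) (bexs ys v \<alpha>)"
      using sat_bexs_mono[OF assms(1) a(2) w'(1,2) assms(2) \<open>v \<notin> set ys\<close> a(3)] .
    then show "\<exists>w\<in>dom K. \<exists>a\<in>dom K. lss K a w \<and> sat K (e(y := a, v := w)) (bexs ys v \<alpha>)"
      using a(1) w'(1,3) by blast
  qed blast
  also have "\<dots> \<longleftrightarrow> (\<exists>w\<in>dom K. sat K (e(v := w)) (bexs (y # ys) v \<alpha>))"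
    unfolding sat_bexs_Cons[OF yv] ..
  finally show ?case .
qed

section \<open>Collection and generalized \<open>\<Sigma>\<close> formulas\<close>

inductive gen_sigma :: "nat \<Rightarrow> fm \<Rightarrow> bool" where
  gen_sigma_sigma: "sigma m \<phi> \<Longrightarrow> gen_sigma m \<phi>"
| gen_sigma_Conj: "gen_sigma m \<phi> \<Longrightarrow> gen_sigma m \<psi> \<Longrightarrow> gen_sigma m (Conj \<phi> \<psi>)"
| gen_sigma_Disj: "gen_sigma m \<phi> \<Longrightarrow> gen_sigma m \<psi> \<Longrightarrow> gen_sigma m (Disj \<phi> \<psi>)"
| gen_sigma_Ex: "gen_sigma (Suc m) \<phi> \<Longrightarrow> gen_sigma (Suc m) (Ex x \<phi>)"
| gen_sigma_BEx: "gen_sigma m \<phi> \<Longrightarrow> x \<noteq> v \<Longrightarrow> gen_sigma m (BEx x (Var v) \<phi>)"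
| gen_sigma_BAll: "gen_sigma m \<phi> \<Longrightarrow> x \<noteq> v \<Longrightarrow> gen_sigma m (BAll x (Var v) \<phi>)"

lemma gen_sigma_0_imp_delta0: "gen_sigma 0 \<phi> \<Longrightarrow> delta0 \<phi>"
  by (induction "0::nat" \<phi> rule: gen_sigma.induct) (auto intro: delta0.intros elim: sigma.cases)

lemma gen_sigma_balls: "gen_sigma m \<alpha> \<Longrightarrow> v \<notin> set ys \<Longrightarrow> gen_sigma m (balls ys v \<alpha>)"
  by (induction ys) (auto intro: gen_sigma_BAll)

lemma BSigma_PAminus: "BSigma k K \<Longrightarrow> PAminus K"
  by (simp add: BSigma_def IDelta0_def)

lemma BSigma_mono:
  assumes "BSigma k K" "j \<le> k"
  shows "BSigma j K"
  using assms(1) unfolding BSigma_def by (blast intro: sigma_mono[OF _ assms(2)])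

lemma BSigma_collection:
  assumes "BSigma k K" "sigma k \<psi>" "x \<noteq> y" "env K e" "a \<in> dom K"
    and "\<forall>u\<in>dom K. lss K u a \<longrightarrow> (\<exists>v\<in>dom K. sat K (e(x := u, y := v)) \<psi>)"
  obtains b where "b \<in> dom K"
    "\<forall>u\<in>dom K. lss K u a \<longrightarrow> (\<exists>v\<in>dom K. lss K v b \<and> sat K (e(x := u, y := v)) \<psi>)"
  using assms unfolding BSigma_def by blast

lemma pi_equiv_if_dual_gen_sigma:
  assumes "\<And>\<phi>. gen_sigma m \<phi> \<Longrightarrow> \<exists>\<psi>. sigma m \<psi> \<and> equiv_in K \<phi> \<psi>" "gen_sigma m (dual \<chi>)"
  obtains \<gamma> where "pi m \<gamma>" "equiv_in K \<chi> \<gamma>"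
proof -
  obtain \<delta> where "sigma m \<delta>" "equiv_in K (dual \<chi>) \<delta>" using assms by blast
  then have "pi m (dual \<delta>)" "equiv_in K \<chi> (dual \<delta>)" by (auto simp: pi_dual equiv_in_def)
  then show thesis using that by blast
qed

lemma sigma_Suc_connective_closed:
  assumes NF: "\<And>\<phi>. gen_sigma m \<phi> \<Longrightarrow> \<exists>\<psi>. sigma m \<psi> \<and> equiv_in K \<phi> \<psi>"
    and c: "c = Conj \<or> c = Disj" and "sigma (Suc m) A" "sigma (Suc m) B" "dom K \<noteq> {}"
  obtains C where "sigma (Suc m) C" "equiv_in K (c A B) C"
proof -
  obtain xs \<alpha> where \<alpha>: "set xs \<inter> fv B = {}" "pi m \<alpha>" "fv (exs xs \<alpha>) = fv A"
      "\<forall>M e. sat (M :: 'a struc) e (exs xs \<alpha>) = sat M e A"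
    by (rule sigma_Suc_prenex_avoiding[OF assms(3) finite_fv[of B]])
  obtain ys \<beta> where \<beta>: "set ys \<inter> fv \<alpha> = {}" "pi m \<beta>" "fv (exs ys \<beta>) = fv B"
      "\<forall>M e. sat (M :: 'a struc) e (exs ys \<beta>) = sat M e B"
    by (rule sigma_Suc_prenex_avoiding[OF assms(4) finite_fv[of \<alpha>]])
  have "gen_sigma m (dual (c \<alpha> \<beta>))"
    using c \<alpha>(2) \<beta>(2) by (elim disjE; simp add: gen_sigma_Conj gen_sigma_Disj gen_sigma_sigma sigma_dual)
  then obtain \<gamma> where \<gamma>: "pi m \<gamma>" "equiv_in K (c \<alpha> \<beta>) \<gamma>"
    using pi_equiv_if_dual_gen_sigma[OF NF] by blast
  have "equiv_in K (c A B) (c (exs xs \<alpha>) (exs ys \<beta>))"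
    using c by (intro equiv_inI) (auto simp: \<alpha>(4) \<beta>(4))
  also have "equiv_in K \<dots> (exs xs (c \<alpha> (exs ys \<beta>)))"
    using \<alpha>(1) \<beta>(3) by (intro equiv_inI sat_connective_exs_left[OF c _ assms(5)]) simp
  also have "equiv_in K \<dots> (exs xs (exs ys (c \<alpha> \<beta>)))"
    by (intro equiv_in_exs equiv_inI sat_connective_exs_right[OF c \<beta>(1) assms(5)])
  also have "equiv_in K \<dots> (exs (xs @ ys) \<gamma>)"
    unfolding exs_append using \<gamma>(2) by (intro equiv_in_exs)
  finally show thesis by (rule that[OF sigma_Suc_exs[OF \<gamma>(1)]])
qed

text \<open>The collection step: \<open>\<forall>x<v \<exists>ys \<alpha>\<close> becomes \<open>\<exists>b \<forall>x<v \<exists>ys<b \<alpha>\<close>; collection applies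
  to the \<open>\<Pi>\<^sub>m\<close> form \<open>\<gamma>\<close> of the inner bounded block.\<close>

lemma BSigma_BAll_exs_iff:
  assumes BS: "BSigma (Suc m) K" and \<gamma>: "pi m \<gamma>" "equiv_in K (bexs ys w \<alpha>) \<gamma>"
    and w: "w \<notin> fv \<alpha>" "w \<notin> set ys" "w \<noteq> x" "w \<noteq> v" and xv: "x \<noteq> v" and e: "env K e"
  shows "sat K e (BAll x (Var v) (exs ys \<alpha>)) \<longleftrightarrow>
    (\<exists>b\<in>dom K. sat K (e(w := b)) (BAll x (Var v) (bexs ys w \<alpha>)))"
proof
  have PA: "PAminus K" using BSigma_PAminus[OF BS] .
  assume "sat K e (BAll x (Var v) (exs ys \<alpha>))"
  then have "\<forall>u\<in>dom K. lss K u (e v) \<longrightarrow> (\<exists>b\<in>dom K. sat K (e(x := u, w := b)) \<gamma>)"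
    using e xv w PA \<gamma>(2) by (auto simp: sat_BAll_Var sat_exs_iff_bexs env_fun_upd equiv_in_def)
  moreover have "e v \<in> dom K" using e by (simp add: env_def)
  ultimately obtain b where b: "b \<in> dom K"
    "\<forall>u\<in>dom K. lss K u (e v) \<longrightarrow> (\<exists>b'\<in>dom K. lss K b' b \<and> sat K (e(x := u, w := b')) \<gamma>)"
    using BSigma_collection[OF BS sigma_Suc_of_pi[OF \<gamma>(1)] w(3)[symmetric] e] by blast
  have "sat K (e(x := u, w := b)) (bexs ys w \<alpha>)" if u: "u \<in> dom K" "lss K u (e v)" for u
  proof -
    obtain b' where b': "b' \<in> dom K" "lss K b' b" "sat K (e(x := u, w := b')) \<gamma>"
      using b(2) u by blast
    then have "sat K (e(x := u, w := b')) (bexs ys w \<alpha>)"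
      using \<gamma>(2) e u by (simp add: equiv_in_def env_fun_upd)
    then show ?thesis using sat_bexs_mono[OF PA b'(1) b(1) b'(2) w(1,2)] by blast
  qed
  then show "\<exists>b\<in>dom K. sat K (e(w := b)) (BAll x (Var v) (bexs ys w \<alpha>))"
    using xv w(3,4) b(1) by (auto simp: sat_BAll_Var fun_upd_twist)
next
  assume "\<exists>b\<in>dom K. sat K (e(w := b)) (BAll x (Var v) (bexs ys w \<alpha>))"
  then show "sat K e (BAll x (Var v) (exs ys \<alpha>))"
    using xv w BSigma_PAminus[OF BS] e
    by (auto simp: sat_BAll_Var sat_exs_iff_bexs env_fun_upd fun_upd_twist)
qed

lemma sigma_Suc_BAll_closed:
  assumes NF: "\<And>\<phi>. gen_sigma m \<phi> \<Longrightarrow> \<exists>\<psi>. sigma m \<psi> \<and> equiv_in K \<phi> \<psi>"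
    and BS: "BSigma (Suc m) K" and A: "sigma (Suc m) A" and xv: "x \<noteq> v"
  obtains C where "sigma (Suc m) C" "equiv_in K (BAll x (Var v) A) C"
proof -
  obtain ys \<alpha> where \<alpha>: "pi m \<alpha>" and A_eq: "A = exs ys \<alpha>" using sigma_Suc_prenex[OF A] by blast
  obtain w where w: "w \<notin> fv \<alpha>" "w \<notin> set ys" "w \<noteq> x" "w \<noteq> v"
    using ex_new_if_finite[OF infinite_UNIV_nat, of "fv \<alpha> \<union> set ys \<union> {x, v}"] finite_fv by auto
  let ?\<psi> = "bexs ys w \<alpha>"
  have dual_\<psi>: "gen_sigma m (dual ?\<psi>)"
    unfolding dual_bexs by (rule gen_sigma_balls[OF gen_sigma_sigma[OF sigma_dual[OF \<alpha>]] w(2)])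
  obtain \<gamma>\<^sub>0 where \<gamma>\<^sub>0: "pi m \<gamma>\<^sub>0" "equiv_in K ?\<psi> \<gamma>\<^sub>0"
    by (rule pi_equiv_if_dual_gen_sigma[OF NF dual_\<psi>])
  have dual_BAll_\<psi>: "gen_sigma m (dual (BAll x (Var v) ?\<psi>))"
    unfolding dual_BAll by (rule gen_sigma_BEx[OF dual_\<psi> xv])
  obtain \<gamma>\<^sub>1 where \<gamma>\<^sub>1: "pi m \<gamma>\<^sub>1" "equiv_in K (BAll x (Var v) ?\<psi>) \<gamma>\<^sub>1"
    by (rule pi_equiv_if_dual_gen_sigma[OF NF dual_BAll_\<psi>])
  have "equiv_in K (BAll x (Var v) A) (Ex w \<gamma>\<^sub>1)"
  proof (rule equiv_inI)
    fix e assume e: "env K e"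
    have "sat K e (BAll x (Var v) A) \<longleftrightarrow> (\<exists>b\<in>dom K. sat K (e(w := b)) (BAll x (Var v) ?\<psi>))"
      unfolding A_eq by (rule BSigma_BAll_exs_iff[OF BS \<gamma>\<^sub>0 w xv e])
    also have "\<dots> \<longleftrightarrow> sat K e (Ex w \<gamma>\<^sub>1)"
      using \<gamma>\<^sub>1(2) e by (auto simp: equiv_in_def env_fun_upd)
    finally show "sat K e (BAll x (Var v) A) \<longleftrightarrow> sat K e (Ex w \<gamma>\<^sub>1)" .
  qed
  then show thesis by (rule that[OF sigma_Suc_Ex[OF sigma_Suc_of_pi[OF \<gamma>\<^sub>1(1)]]])
qed

lemma gen_sigma_Suc_equiv_sigma:
  assumes NF: "\<And>\<phi>. gen_sigma m \<phi> \<Longrightarrow> \<exists>\<psi>. sigma m \<psi> \<and> equiv_in K \<phi> \<psi>"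
    and BS: "BSigma (Suc m) K"
  shows "gen_sigma (Suc m) \<phi> \<Longrightarrow> \<exists>\<psi>. sigma (Suc m) \<psi> \<and> equiv_in K \<phi> \<psi>"
proof (induction "Suc m" \<phi> rule: gen_sigma.induct)
  case (gen_sigma_sigma \<phi>)
  then show ?case by auto
next
  have ne: "dom K \<noteq> {}" using PAminus_zer_in_dom[OF BSigma_PAminus[OF BS]] by blast
  {
    case (gen_sigma_Conj \<phi> \<psi>)
    then obtain \<phi>' \<psi>' where \<phi>': "sigma (Suc m) \<phi>'" "equiv_in K \<phi> \<phi>'"
      and \<psi>': "sigma (Suc m) \<psi>'" "equiv_in K \<psi> \<psi>'" by blast
    obtain C where "sigma (Suc m) C" "equiv_in K (Conj \<phi>' \<psi>') C"
      by (rule sigma_Suc_connective_closed[OF NF disjI1[OF refl] \<phi>'(1) \<psi>'(1) ne])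
    then show ?case using equiv_in_trans[OF equiv_in_Conj[OF \<phi>'(2) \<psi>'(2)]] by blast
  }
  {
    case (gen_sigma_Disj \<phi> \<psi>)
    then obtain \<phi>' \<psi>' where \<phi>': "sigma (Suc m) \<phi>'" "equiv_in K \<phi> \<phi>'"
      and \<psi>': "sigma (Suc m) \<psi>'" "equiv_in K \<psi> \<psi>'" by blast
    obtain C where "sigma (Suc m) C" "equiv_in K (Disj \<phi>' \<psi>') C"
      by (rule sigma_Suc_connective_closed[OF NF disjI2[OF refl] \<phi>'(1) \<psi>'(1) ne])
    then show ?case using equiv_in_trans[OF equiv_in_Disj[OF \<phi>'(2) \<psi>'(2)]] by blast
  }
  {
    case (gen_sigma_BEx \<phi> x v)
    then obtain \<phi>' where \<phi>': "sigma (Suc m) \<phi>'" "equiv_in K \<phi> \<phi>'" by blast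
    have Lt: "sigma (Suc m) (Lt (Var x) (Var v))" using delta0_sigma_pi delta0.intros(2) by blast
    obtain C where C: "sigma (Suc m) C" "equiv_in K (Conj (Lt (Var x) (Var v)) \<phi>') C"
      by (rule sigma_Suc_connective_closed[OF NF disjI1[OF refl] Lt \<phi>'(1) ne])
    have "equiv_in K (BEx x (Var v) \<phi>) (Ex x C)"
      unfolding BEx_def
      by (intro equiv_in_Ex equiv_in_trans[OF equiv_in_Conj[OF equiv_in_refl \<phi>'(2)] C(2)])
    then show ?case using sigma_Suc_Ex[OF C(1)] by blast
  }
next
  case (gen_sigma_Ex \<phi> x)
  then obtain \<phi>' where "sigma (Suc m) \<phi>'" "equiv_in K \<phi> \<phi>'" by blast
  then show ?case using sigma_Suc_Ex equiv_in_Ex by blast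
next
  case (gen_sigma_BAll \<phi> x v)
  then obtain \<phi>' where \<phi>': "sigma (Suc m) \<phi>'" "equiv_in K \<phi> \<phi>'" by blast
  obtain C where "sigma (Suc m) C" "equiv_in K (BAll x (Var v) \<phi>') C"
    by (rule sigma_Suc_BAll_closed[OF NF BS \<phi>'(1) \<open>x \<noteq> v\<close>])
  then show ?case using equiv_in_trans[OF equiv_in_BAll[OF \<phi>'(2)]] by blast
qed

theorem gen_sigma_equiv_sigma:
  assumes "BSigma k K" "m \<le> k" "gen_sigma m \<phi>"
  shows "\<exists>\<psi>. sigma m \<psi> \<and> equiv_in K \<phi> \<psi>"
  using assms(2,3)
proof (induction m arbitrary: \<phi>)
  case 0
  then show ?case using gen_sigma_0_imp_delta0 delta0_sigma_pi equiv_in_refl by blast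
next
  case (Suc m)
  show ?case
    by (rule gen_sigma_Suc_equiv_sigma[OF _ BSigma_mono[OF assms(1) Suc.prems(1)] Suc.prems(2)])
      (use Suc.IH Suc.prems(1) in simp)
qed

section \<open>Transfer between \<open>M\<close> and \<open>K\<close>\<close>

lemma substructure_lss:
  "substructure M K \<Longrightarrow> u \<in> dom M \<Longrightarrow> v \<in> dom M \<Longrightarrow> lss M u v \<longleftrightarrow> lss K u v"
  by (simp add: substructure_def)

lemma substructure_env: "substructure M K \<Longrightarrow> env M e \<Longrightarrow> env K e"
  by (auto simp: substructure_def env_def)

lemma sigma_elementary_sat:
  "sigma_elementary k M K \<Longrightarrow> sigma k \<phi> \<Longrightarrow> env M e \<Longrightarrow> sat M e \<phi> \<longleftrightarrow> sat K e \<phi>"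
  by (simp add: sigma_elementary_def)

lemma sigma_elementary_witness:
  assumes el: "sigma_elementary (Suc k) M K" and \<gamma>: "sigma (Suc k) \<gamma>" "equiv_in K \<chi> \<gamma>"
    and e: "env M e" and "c \<in> dom K" "sat K (e(x := c)) \<chi>"
  shows "\<exists>u\<in>dom M. sat K (e(x := u)) \<chi>"
proof -
  have sub: "substructure M K" using el by (simp add: sigma_elementary_def)
  have eK: "env K e" using substructure_env[OF sub e] .
  have "sat K e (Ex x \<gamma>)" using assms(5,6) \<gamma>(2) eK by (auto simp: equiv_in_def env_fun_upd)
  then have "sat M e (Ex x \<gamma>)" using sigma_elementary_sat[OF el sigma_Suc_Ex[OF \<gamma>(1)] e] by simp
  then obtain u where u: "u \<in> dom M" "sat M (e(x := u)) \<gamma>" by auto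
  have "sat K (e(x := u)) \<gamma>" using u sigma_elementary_sat[OF el \<gamma>(1) env_fun_upd[OF e u(1)]] by simp
  then have "sat K (e(x := u)) \<chi>"
    using \<gamma>(2) env_fun_upd[OF e u(1)] substructure_env[OF sub] by (simp add: equiv_in_def)
  then show ?thesis using u(1) by blast
qed

lemma forall_bounded_exists_up:
  assumes BS: "BSigma (Suc n) K" and el: "sigma_elementary (Suc (Suc n)) M K"
    and \<phi>: "pi (Suc n) \<phi>" and "x \<noteq> y" and e: "env M e" and a: "a \<in> dom M" and c: "c \<in> dom K"
    and H: "\<forall>u\<in>dom M. \<exists>v\<in>dom M. lss M v a \<and> sat M (e(x := u, y := v)) \<phi>"
  shows "\<exists>v\<in>dom K. lss K v a \<and> sat K (e(x := c, y := v)) \<phi>"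
proof (rule ccontr)
  assume no_witness: "\<not> ?thesis"
  have sub: "substructure M K" using el by (simp add: sigma_elementary_def)
  obtain z where z: "z \<notin> fv \<phi>" "z \<noteq> x" "z \<noteq> y"
    using ex_new_if_finite[OF infinite_UNIV_nat, of "fv \<phi> \<union> {x, y}"] finite_fv by auto
  let ?\<Phi> = "BAll y (Var z) (dual \<phi>)"
  have "gen_sigma (Suc n) ?\<Phi>"
    by (rule gen_sigma_BAll[OF gen_sigma_sigma[OF sigma_dual[OF \<phi>]] z(3)[symmetric]])
  then obtain S where S: "sigma (Suc n) S" "equiv_in K ?\<Phi> S"
    using gen_sigma_equiv_sigma[OF BS le_refl] by blast
  define e' where "e' = e(z := a)"
  have e': "env M e'" using env_fun_upd[OF e a] by (simp add: e'_def)
  have sat_\<Phi>: "sat N (e'(x := u)) ?\<Phi> \<longleftrightarrow> (\<forall>w\<in>dom N. lss N w a \<longrightarrow> \<not> sat N (e(x := u, y := w)) \<phi>)"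
    for N :: "'a struc" and u
  proof -
    have "(e'(x := u)) z = a" using z(2) by (simp add: e'_def)
    moreover have "e'(x := u, y := w) = (e(x := u, y := w))(z := a)" for w
      using z by (auto simp: e'_def fun_eq_iff)
    ultimately show ?thesis using z by (simp add: sat_BAll_Var sat_fun_upd_fresh)
  qed
  have "sat K (e'(x := c)) ?\<Phi>" using no_witness unfolding sat_\<Phi> by blast
  then obtain u where u: "u \<in> dom M" "sat K (e'(x := u)) ?\<Phi>"
    using sigma_elementary_witness[OF el sigma_mono[OF S(1) le_SucI[OF le_refl]] S(2) e' c] by blast
  obtain v where v: "v \<in> dom M" "lss M v a" "sat M (e(x := u, y := v)) \<phi>" using H u(1) by blast
  have "lss K v a" using v(1,2) a substructure_lss[OF sub] by blast
  moreover have "sat K (e(x := u, y := v)) \<phi>"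
    using v(3) sigma_elementary_sat[OF el sigma_Suc_of_pi[OF \<phi>]] e u(1) v(1) by (simp add: env_fun_upd)
  moreover have "v \<in> dom K" using v(1) sub by (auto simp: substructure_def)
  ultimately show False using u(2) unfolding sat_\<Phi> by blast
qed

lemma end_extension_below_in_dom:
  assumes "end_extension M K" "PAminus K" "a \<in> dom M" "v \<in> dom K" "lss K v a"
  shows "v \<in> dom M"
proof (rule ccontr)
  assume "v \<notin> dom M"
  then have "lss K a v" using assms(1,3,4) by (simp add: end_extension_def)
  moreover have "a \<in> dom K" using assms(1,3) by (auto simp: end_extension_def substructure_def)
  ultimately have "lss K v v" using PAminus_lss_trans[OF assms(2) assms(4)] assms(4,5) by blast
  then show False using PAminus_lss_irrefl[OF assms(2,4)] by blast
qed

lemma unbounded_witnesses_down: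
  assumes BS: "BSigma (Suc n) K" and el: "sigma_elementary (Suc (Suc n)) M K"
    and end_ext: "end_extension M K" and \<phi>: "pi (Suc n) \<phi>" and "x \<noteq> y" and e: "env M e"
    and v: "v \<in> dom M" and c: "c \<in> dom K - dom M" and c_sat: "sat K (e(x := c, y := v)) \<phi>"
    and b: "b \<in> dom M"
  shows "\<exists>u\<in>dom M. lss M b u \<and> sat M (e(x := u, y := v)) \<phi>"
proof -
  have sub: "substructure M K" using el by (simp add: sigma_elementary_def)
  obtain z where z: "z \<notin> fv \<phi>" "z \<noteq> x" "z \<noteq> y"
    using ex_new_if_finite[OF infinite_UNIV_nat, of "fv \<phi> \<union> {x, y}"] finite_fv by auto
  let ?\<Psi> = "Conj (Lt (Var z) (Var x)) \<phi>"
  have "delta0 (Neg (Lt (Var z) (Var x)))" using delta0_dual[OF delta0.intros(2)] by simp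
  then have dual_\<Psi>: "gen_sigma (Suc n) (dual ?\<Psi>)"
    using gen_sigma_Disj[OF gen_sigma_sigma gen_sigma_sigma[OF sigma_dual[OF \<phi>]]] delta0_sigma_pi
    by simp
  obtain \<gamma> where \<gamma>: "pi (Suc n) \<gamma>" "equiv_in K ?\<Psi> \<gamma>"
    by (rule pi_equiv_if_dual_gen_sigma[OF gen_sigma_equiv_sigma[OF BS le_refl] dual_\<Psi>])
  define e' where "e' = e(y := v, z := b)"
  have e': "env M e'" using env_fun_upd[OF env_fun_upd[OF e v] b] by (simp add: e'_def)
  have sat_\<Psi>: "sat N (e'(x := u)) ?\<Psi> \<longleftrightarrow> lss N b u \<and> sat N (e(x := u, y := v)) \<phi>"
    for N :: "'a struc" and u
  proof -
    have "e'(x := u) = (e(x := u, y := v))(z := b)"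
      using z \<open>x \<noteq> y\<close> by (auto simp: e'_def fun_eq_iff)
    then show ?thesis using z \<open>x \<noteq> y\<close> by (simp add: sat_fun_upd_fresh)
  qed
  have "lss K b c" using end_ext c b by (simp add: end_extension_def)
  then have "sat K (e'(x := c)) ?\<Psi>" using c_sat unfolding sat_\<Psi> by blast
  then obtain u where u: "u \<in> dom M" "sat K (e'(x := u)) ?\<Psi>"
    using sigma_elementary_witness[OF el sigma_Suc_of_pi[OF \<gamma>(1)] \<gamma>(2) e'] c by blast
  then have "lss K b u" "sat K (e(x := u, y := v)) \<phi>" unfolding sat_\<Psi> by blast+
  moreover have "sat M (e(x := u, y := v)) \<phi> \<longleftrightarrow> sat K (e(x := u, y := v)) \<phi>"
    using sigma_elementary_sat[OF el sigma_Suc_of_pi[OF \<phi>]] e u(1) v by (simp add: env_fun_upd)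
  ultimately show ?thesis using u(1) b substructure_lss[OF sub b u(1)] by blast
qed

theorem proposition1p3:
  fixes n :: nat and M K :: "'a struc"
  assumes "IDelta0 M"
    and "BSigma (Suc n) K"
    and "sigma_elementary (Suc (Suc n)) M K"
    and "end_extension M K"
    and "proper_extension M K"
  shows "\<forall>a\<in>dom M. \<forall>\<phi> x y e. pi (Suc n) \<phi> \<longrightarrow> x \<noteq> y \<longrightarrow> env M e \<longrightarrow>
     ((\<forall>u\<in>dom M. \<exists>v\<in>dom M. lss M v a \<and> sat M (e(x := u, y := v)) \<phi>) \<longrightarrow>
      (\<exists>v\<in>dom M. lss M v a \<and>
         (\<forall>b\<in>dom M. \<exists>u\<in>dom M. lss M b u \<and> sat M (e(x := u, y := v)) \<phi>)))"
proof (intro ballI allI impI)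
  fix a \<phi> x y e
  assume a: "a \<in> dom M" and \<phi>: "pi (Suc n) \<phi>" and xy: "x \<noteq> y" and e: "env M e"
    and H: "\<forall>u\<in>dom M. \<exists>v\<in>dom M. lss M v a \<and> sat M (e(x := u, y := v)) \<phi>"
  have sub: "substructure M K" using assms(3) by (simp add: sigma_elementary_def)
  obtain c where c: "c \<in> dom K - dom M"
    using assms(5) sub by (auto simp: proper_extension_def substructure_def)
  obtain v where v: "v \<in> dom K" "lss K v a" "sat K (e(x := c, y := v)) \<phi>"
    using forall_bounded_exists_up[OF assms(2,3) \<phi> xy e a _ H] c by blast
  have vM: "v \<in> dom M"
    by (rule end_extension_below_in_dom[OF assms(4) BSigma_PAminus[OF assms(2)] a v(1,2)])
  have "lss M v a" using v(2) substructure_lss[OF sub vM a] by blast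
  moreover have "\<forall>b\<in>dom M. \<exists>u\<in>dom M. lss M b u \<and> sat M (e(x := u, y := v)) \<phi>"
    using unbounded_witnesses_down[OF assms(2,3,4) \<phi> xy e vM c v(3)] by blast
  ultimately show "\<exists>v\<in>dom M. lss M v a \<and>
      (\<forall>b\<in>dom M. \<exists>u\<in>dom M. lss M b u \<and> sat M (e(x := u, y := v)) \<phi>)"
    using vM by blast
qed

end
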